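(* Let $n,k,j$ be positive integers with $n>2k$, let $(S^n,g_0)$ be the round unit sphere in $\mathbb{R}^{n+1}$, and let $L$ be a formally self-adjoint $j$-differential operator on $S^n$ (see context). Set $p:=\frac{n(j+1)}{n-2k}$, $\mathcal V:=\{u\in C^\infty(S^n):\int_{S^n}|u|^p\,d\mathrm{vol}_{g_0}=\omega_n\}$ and $\mathcal E_L(u):=\int_{S^n}u\,L(u,\dots,u)\,d\mathrm{vol}_{g_0}$. Suppose $u\in\mathcal V$ is positive and is a local minimizer of $\mathcal E_L\colon\mathcal V\to\mathbb{R}$, and suppose \[ \int_{S^n}x^iu^{p}\,d\mathrm{vol}_{g_0}=0\qquad\text{for all }0\le i\le n, \] where $x^0,\dots,x^n$ are the restrictions of the coordinate functions of $\mathbb{R}^{n+1}$. Then \[ \sum_{i=0}^n\int_{S^n}x^iu\,\bigl(L(x^iu,u,\dots,u)-x^iL(u,u,\dots,u)\bigr)\,d\mathrm{vol}_{g_0} \ge \frac{2(j+1)k}{j(n-2k)}\,\mathcal E_L(u). \]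
   Context: $\omega_n$ is the volume of the round unit $S^n$. A formally self-adjoint $j$-differential operator is a map $L\colon(C^\infty(S^n))^j\to C^\infty(S^n)$ that is multilinear over $\mathbb{R}$, is a differential operator in each argument, and such that $(u_0,\dots,u_j)\mapsto\int_{S^n}u_0\,L(u_1,\dots,u_j)\,d\mathrm{vol}_{g_0}$ is symmetric in $(u_0,\dots,u_j)$. "Local minimizer" means $\mathcal E_L(v)\ge\mathcal E_L(u)$ for all $v\in\mathcal V$ in a $C^\infty$-neighborhood of $u$. *)

theory Defs
  imports "HOL-Analysis.Analysis" "HOL-Library.Multiset"
begin

text \<open>The round unit sphere S^n is sphere 0 1 in real^'n, with n + 1 = CARD('n).
  A function on S^n is represented by a function real^'n => real vanishing off the sphere.\<close>

definition radial_ext :: "(real^'n \<Rightarrow> real) \<Rightarrow> real^'n \<Rightarrow> real" where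
  "radial_ext u x = u (x /\<^sub>R norm x)"

fun iter_pd :: "'n list \<Rightarrow> (real^'n \<Rightarrow> real) \<Rightarrow> real^'n \<Rightarrow> real" where
  "iter_pd [] f = f"
| "iter_pd (i # is) f = (\<lambda>x. frechet_derivative (iter_pd is f) (at x) (axis i 1))"

definition C_inf_on :: "(real^'n) set \<Rightarrow> (real^'n \<Rightarrow> real) \<Rightarrow> bool" where
  "C_inf_on S f \<longleftrightarrow> (\<forall>is. \<forall>x\<in>S. iter_pd is f differentiable (at x))"

text \<open>C^infinity(S^n): u is smooth iff its degree-0 homogeneous extension is smooth on R^(n+1) - 0.\<close>
definition smooth_sphere :: "(real^'n \<Rightarrow> real) set" where
  "smooth_sphere = {u. (\<forall>x. x \<notin> sphere 0 1 \<longrightarrow> u x = 0) \<and> C_inf_on (UNIV - {0}) (radial_ext u)}"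

text \<open>Integral over S^n w.r.t. the round volume, via the cone formula
  int_{S^n} f = (n+1) int_{B^{n+1}} f(x/|x|) dx.\<close>
definition sphere_int :: "(real^'n \<Rightarrow> real) \<Rightarrow> real" where
  "sphere_int f = real CARD('n) * (LINT x|lborel. indicator (ball 0 1) x * f (x /\<^sub>R norm x))"

definition omega :: "'n::finite itself \<Rightarrow> real" where
  "omega _ = sphere_int (\<lambda>x::real^'n. 1)"

text \<open>Differential operators (Grothendieck's algebraic definition, order <= m).\<close>
primrec diffop_order :: "nat \<Rightarrow> ((real^'n \<Rightarrow> real) \<Rightarrow> (real^'n \<Rightarrow> real)) \<Rightarrow> bool" where
  "diffop_order 0 D = (\<forall>f\<in>smooth_sphere. \<forall>u\<in>smooth_sphere.
      D (\<lambda>x. f x * u x) = (\<lambda>x. f x * D u x))"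
| "diffop_order (Suc m) D = (\<forall>f\<in>smooth_sphere.
      diffop_order m (\<lambda>u x. D (\<lambda>y. f y * u y) x - f x * D u x))"

definition is_diffop :: "((real^'n \<Rightarrow> real) \<Rightarrow> (real^'n \<Rightarrow> real)) \<Rightarrow> bool" where
  "is_diffop D \<longleftrightarrow> (\<forall>u\<in>smooth_sphere. D u \<in> smooth_sphere) \<and> (\<exists>m. diffop_order m D)"

definition j_diffop :: "nat \<Rightarrow> ((real^'n \<Rightarrow> real) list \<Rightarrow> (real^'n \<Rightarrow> real)) \<Rightarrow> bool" where
  "j_diffop j L \<longleftrightarrow>
     (\<forall>us. length us = j \<and> set us \<subseteq> smooth_sphere \<longrightarrow> L us \<in> smooth_sphere) \<and>
     (\<forall>us i v w a b. length us = j \<and> set us \<subseteq> smooth_sphere \<and> i < j \<and>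
         v \<in> smooth_sphere \<and> w \<in> smooth_sphere \<longrightarrow>
         L (us[i := (\<lambda>x. a * v x + b * w x)]) = (\<lambda>x. a * L (us[i := v]) x + b * L (us[i := w]) x)) \<and>
     (\<forall>us i. length us = j \<and> set us \<subseteq> smooth_sphere \<and> i < j \<longrightarrow>
         is_diffop (\<lambda>v. L (us[i := v])))"

definition sa_form :: "((real^'n \<Rightarrow> real) list \<Rightarrow> (real^'n \<Rightarrow> real)) \<Rightarrow> (real^'n \<Rightarrow> real) list \<Rightarrow> real" where
  "sa_form L us = sphere_int (\<lambda>x. hd us x * L (tl us) x)"

definition formally_self_adjoint :: "nat \<Rightarrow> ((real^'n \<Rightarrow> real) list \<Rightarrow> (real^'n \<Rightarrow> real)) \<Rightarrow> bool" where
  "formally_self_adjoint j L \<longleftrightarrow> j_diffop j L \<and>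
     (\<forall>us vs. length us = j + 1 \<and> set us \<subseteq> smooth_sphere \<and> mset vs = mset us \<longrightarrow>
        sa_form L vs = sa_form L us)"

definition energy :: "nat \<Rightarrow> ((real^'n \<Rightarrow> real) list \<Rightarrow> (real^'n \<Rightarrow> real)) \<Rightarrow> (real^'n \<Rightarrow> real) \<Rightarrow> real" where
  "energy j L u = sphere_int (\<lambda>x. u x * L (replicate j u) x)"

definition constraint_set :: "real \<Rightarrow> (real^'n \<Rightarrow> real) set" where
  "constraint_set p = {u \<in> smooth_sphere. sphere_int (\<lambda>x. \<bar>u x\<bar> powr p) = omega TYPE('n)}"

text \<open>Basic C^m-neighbourhoods (C^infinity topology).\<close>
definition cm_close :: "nat \<Rightarrow> real \<Rightarrow> (real^'n \<Rightarrow> real) \<Rightarrow> (real^'n \<Rightarrow> real) \<Rightarrow> bool" where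
  "cm_close m \<epsilon> u v \<longleftrightarrow> (\<forall>is. length is \<le> m \<longrightarrow>
      (\<forall>x\<in>sphere 0 1. \<bar>iter_pd is (radial_ext (\<lambda>y. v y - u y)) x\<bar> < \<epsilon>))"

definition local_minimizer :: "((real^'n \<Rightarrow> real) \<Rightarrow> real) \<Rightarrow> (real^'n \<Rightarrow> real) set \<Rightarrow> (real^'n \<Rightarrow> real) \<Rightarrow> bool" where
  "local_minimizer E V u \<longleftrightarrow> u \<in> V \<and>
     (\<exists>m \<epsilon>. \<epsilon> > 0 \<and> (\<forall>v\<in>V. cm_close m \<epsilon> u v \<longrightarrow> E v \<ge> E u))"

end

theory Submission
  imports Defs "HOL-Library.Landau_Symbols" "HOL-Real_Asymp.Real_Asymp"
begin

text \<open>For each coordinate \<open>i\<close> perturb \<open>u\<close> to \<open>u + t x\<^sup>i u\<close> and rescale it back onto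
  the constraint set \<open>\<V>\<close>. Since \<open>\<E>\<^sub>L\<close> is homogeneous of degree \<open>j + 1\<close>, local
  minimality gives \<open>\<E>\<^sub>L(u + t x\<^sup>i u) \<ge> c(t)\<^bsup>(j+1)/p\<^esup> \<E>\<^sub>L(u)\<close> for small \<open>t\<close>,
  where \<open>c(t)\<close> is the normalised \<open>L\<^sup>p\<close>-mass of the perturbation. Both sides are expanded
  to second order in \<open>t\<close>: the left by multilinearity and symmetry of \<open>L\<close>, the right by
  Taylor expansion of \<open>(1 + s)\<^sup>p\<close>, where the vanishing moments \<open>\<integral> x\<^sup>i u\<^sup>p\<close> kill
  the linear term of \<open>c(t)\<close>. Comparing the coefficients of \<open>t\<^sup>2\<close> and summing over \<open>i\<close>
  with \<open>\<Sum>\<^sub>i (x\<^sup>i)\<^sup>2 = 1\<close> yields the inequality.\<close>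

section \<open>Integrals over the sphere\<close>

lemma normalize_in_sphere: "(x::real^'n) \<noteq> 0 \<Longrightarrow> x /\<^sub>R norm x \<in> sphere 0 1"
  using norm_sgn[of x] by (simp add: sgn_div_norm)

lemma sphere_integrand_measurable:
  fixes f :: "real^'n \<Rightarrow> real"
  assumes "continuous_on (sphere 0 1) f"
  shows "(\<lambda>x. f (x /\<^sub>R norm x)) \<in> borel_measurable lborel"
proof -
  have sub: "(\<lambda>x::real^'n. x /\<^sub>R norm x) ` (-{0}) \<subseteq> sphere 0 1"
    using normalize_in_sphere by blast
  have "continuous_on (-{0}) (\<lambda>x::real^'n. f (x /\<^sub>R norm x))"
    by (rule continuous_on_compose2[OF assms _ sub]) (auto intro!: continuous_intros)
  then have "(\<lambda>x::real^'n. indicator (-{0}) x *\<^sub>R f (x /\<^sub>R norm x)) \<in> borel_measurable borel"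
    by (rule borel_measurable_continuous_on_indicator[rotated]) auto
  moreover have "(\<lambda>x::real^'n. f (x /\<^sub>R norm x)) =
      (\<lambda>x. indicator (-{0}) x *\<^sub>R f (x /\<^sub>R norm x) + indicator {0} x * f 0)"
    by (auto simp: indicator_def)
  ultimately show ?thesis by simp
qed

lemma sphere_integrand_integrable:
  fixes f :: "real^'n \<Rightarrow> real"
  assumes "continuous_on (sphere 0 1) f"
  shows "integrable lborel (\<lambda>x. indicator (ball 0 1) x * f (x /\<^sub>R norm x))"
proof -
  obtain B where B: "\<And>y. y \<in> sphere 0 1 \<Longrightarrow> \<bar>f y\<bar> \<le> B"
    using compact_imp_bounded[OF compact_continuous_image[OF assms compact_sphere]]
    unfolding bounded_iff by (metis image_eqI real_norm_def)
  have "integrable lborel (\<lambda>x. indicator (ball 0 1) x *\<^sub>R f (x /\<^sub>R norm x))"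
  proof (rule integrableI_bounded_set_indicator[where B = "max B \<bar>f 0\<bar>"])
    show "emeasure lborel (ball (0::real^'n) 1) < \<infinity>"
      by (rule emeasure_bounded_finite) simp
    show "AE x in lborel. x \<in> ball 0 1 \<longrightarrow> norm (f (x /\<^sub>R norm x)) \<le> max B \<bar>f 0\<bar>"
    proof (rule AE_I2, rule impI)
      fix x :: "real^'n"
      show "norm (f (x /\<^sub>R norm x)) \<le> max B \<bar>f 0\<bar>"
        using B[OF normalize_in_sphere, of x] by (cases "x = 0") auto
    qed
  qed (use sphere_integrand_measurable[OF assms] in auto)
  then show ?thesis by simp
qed

lemma sphere_int_mono:
  fixes f g :: "real^'n \<Rightarrow> real"
  assumes "continuous_on (sphere 0 1) f" "continuous_on (sphere 0 1) g"
    and "\<And>x. x \<in> sphere 0 1 \<Longrightarrow> f x \<le> g x"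
  shows "sphere_int f \<le> sphere_int g"
proof -
  have "(LINT x|lborel. indicator (ball 0 1) x * f (x /\<^sub>R norm x))
      \<le> (LINT x|lborel. indicator (ball 0 1) x * g (x /\<^sub>R norm x))"
  proof (rule integral_mono_AE[OF sphere_integrand_integrable[OF assms(1)]
        sphere_integrand_integrable[OF assms(2)]])
    show "AE x in lborel. indicator (ball 0 1) x * f (x /\<^sub>R norm x)
        \<le> indicator (ball 0 1) x * g (x /\<^sub>R norm x)"
      using AE_lborel_singleton[of 0]
      by eventually_elim (auto intro!: mult_left_mono assms(3) normalize_in_sphere)
  qed
  then show ?thesis unfolding sphere_int_def by (simp add: mult_left_mono)
qed

lemma sphere_int_cong:
  fixes f g :: "real^'n \<Rightarrow> real"
  assumes "continuous_on (sphere 0 1) f" "continuous_on (sphere 0 1) g"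
    and "\<And>x. x \<in> sphere 0 1 \<Longrightarrow> f x = g x"
  shows "sphere_int f = sphere_int g"
  using sphere_int_mono[OF assms(1,2)] sphere_int_mono[OF assms(2,1)] assms(3)
  by (simp add: order_antisym)

lemma sphere_int_cmult: "sphere_int (\<lambda>x. c * f x) = c * sphere_int (f :: real^'n \<Rightarrow> real)"
  unfolding sphere_int_def by (simp add: mult.left_commute)

lemma sphere_int_abs_le:
  fixes f g :: "real^'n \<Rightarrow> real"
  assumes "continuous_on (sphere 0 1) f" "continuous_on (sphere 0 1) g"
    and "\<And>x. x \<in> sphere 0 1 \<Longrightarrow> \<bar>f x\<bar> \<le> g x"
  shows "\<bar>sphere_int f\<bar> \<le> sphere_int g"
proof -
  have "sphere_int f \<le> sphere_int g"
    using assms by (intro sphere_int_mono) (auto simp: abs_le_iff)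
  moreover have "sphere_int (\<lambda>x. (- 1) * f x) \<le> sphere_int g"
    using assms by (intro sphere_int_mono) (auto intro!: continuous_intros simp: abs_le_iff)
  ultimately show ?thesis unfolding sphere_int_cmult by (simp add: abs_le_iff)
qed

lemma sphere_int_add:
  fixes f g :: "real^'n \<Rightarrow> real"
  assumes "continuous_on (sphere 0 1) f" "continuous_on (sphere 0 1) g"
  shows "sphere_int (\<lambda>x. f x + g x) = sphere_int f + sphere_int g"
  unfolding sphere_int_def
  using Bochner_Integration.integral_add[OF sphere_integrand_integrable[OF assms(1)]
      sphere_integrand_integrable[OF assms(2)]]
  by (simp add: distrib_left)

lemma sphere_int_diff:
  fixes f g :: "real^'n \<Rightarrow> real"
  assumes "continuous_on (sphere 0 1) f" "continuous_on (sphere 0 1) g"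
  shows "sphere_int (\<lambda>x. f x - g x) = sphere_int f - sphere_int g"
  unfolding sphere_int_def
  using Bochner_Integration.integral_diff[OF sphere_integrand_integrable[OF assms(1)]
      sphere_integrand_integrable[OF assms(2)]]
  by (simp add: right_diff_distrib)

lemma sphere_int_sum:
  fixes f :: "'i \<Rightarrow> real^'n \<Rightarrow> real"
  assumes "finite I" "\<And>i. i \<in> I \<Longrightarrow> continuous_on (sphere 0 1) (f i)"
  shows "sphere_int (\<lambda>x. \<Sum>i\<in>I. f i x) = (\<Sum>i\<in>I. sphere_int (f i))"
  using assms
proof (induction I rule: finite_induct)
  case empty
  then show ?case unfolding sphere_int_def by simp
next
  case (insert a I)
  then have "sphere_int (\<lambda>x. f a x + (\<Sum>i\<in>I. f i x)) = sphere_int (f a) + sphere_int (\<lambda>x. \<Sum>i\<in>I. f i x)"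
    by (intro sphere_int_add) (auto intro!: continuous_on_sum)
  with insert show ?case by simp
qed

lemma sum_coord_sq_sphere: "(x::real^'n) \<in> sphere 0 1 \<Longrightarrow> (\<Sum>i\<in>UNIV. (x $ i)^2) = 1"
  by (simp add: norm_eq_sqrt_inner inner_vec_def power2_eq_square)

lemma sphere_int_sum_coord_sq:
  fixes f :: "real^'n \<Rightarrow> real"
  assumes "continuous_on (sphere 0 1) f"
  shows "(\<Sum>i\<in>UNIV. sphere_int (\<lambda>x. (x $ i)^2 * f x)) = sphere_int f"
proof -
  have "(\<Sum>i\<in>UNIV. sphere_int (\<lambda>x. (x $ i)^2 * f x)) = sphere_int (\<lambda>x. (\<Sum>i\<in>UNIV. (x $ i)^2) * f x)"
    using assms by (subst sphere_int_sum[symmetric]) (auto intro!: continuous_intros simp: sum_distrib_right)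
  also have "\<dots> = sphere_int f"
    using assms by (intro sphere_int_cong) (auto intro!: continuous_intros simp: sum_coord_sq_sphere)
  finally show ?thesis .
qed

lemma omega_pos: "omega TYPE('n::finite) > 0"
  using content_ball_pos[of "1::real" "0::real^'n"] unfolding omega_def sphere_int_def by simp

section \<open>Smooth functions on the sphere\<close>

lemma frechet_derivative_cong_open:
  assumes "open S" "x \<in> S" "\<And>y. y \<in> S \<Longrightarrow> f y = g y"
  shows "frechet_derivative f (at x) = frechet_derivative g (at x)"
proof -
  have "(f has_derivative D) (at x) \<longleftrightarrow> (g has_derivative D) (at x)" for D
    using has_derivative_transform_within_open[OF _ assms(1,2), of f D UNIV g]
      has_derivative_transform_within_open[OF _ assms(1,2), of g D UNIV f] assms(3)
    by metis
  then show ?thesis unfolding frechet_derivative_def by simp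
qed

lemma differentiable_cong_open:
  assumes "open S" "x \<in> S" "\<And>y. y \<in> S \<Longrightarrow> f y = g y" "g differentiable (at x)"
  shows "f differentiable (at x)"
  using assms has_derivative_transform_within_open[OF _ assms(1,2), of g _ UNIV f]
  unfolding differentiable_def by metis

lemma iter_pd_cong_open:
  assumes "open S" "\<And>y. y \<in> S \<Longrightarrow> f y = g y" "x \<in> S"
  shows "iter_pd is f x = iter_pd is g x"
  using assms(3)
proof (induction "is" arbitrary: x)
  case (Cons i "is")
  then have "frechet_derivative (iter_pd is f) (at x) = frechet_derivative (iter_pd is g) (at x)"
    by (intro frechet_derivative_cong_open[OF assms(1)])
  then show ?case by simp
qed (use assms(2) in simp)

lemma iter_pd_lincomb:
  fixes f g :: "real^'n \<Rightarrow> real"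
  assumes f: "C_inf_on (-{0}) f" and g: "C_inf_on (-{0}) g" and "x \<noteq> 0"
  shows "iter_pd is (\<lambda>y. a * f y + b * g y) x = a * iter_pd is f x + b * iter_pd is g x"
  using \<open>x \<noteq> 0\<close>
proof (induction "is" arbitrary: x)
  case (Cons i "is")
  have df: "(iter_pd is f has_derivative frechet_derivative (iter_pd is f) (at x)) (at x)"
    and dg: "(iter_pd is g has_derivative frechet_derivative (iter_pd is g) (at x)) (at x)"
    using f g Cons.prems frechet_derivative_works unfolding C_inf_on_def by blast+
  have "frechet_derivative (iter_pd is (\<lambda>y. a * f y + b * g y)) (at x)
      = frechet_derivative (\<lambda>y. a * iter_pd is f y + b * iter_pd is g y) (at x)"
    using Cons by (intro frechet_derivative_cong_open[of "-{0}"]) auto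
  also have "\<dots> = (\<lambda>v. a * frechet_derivative (iter_pd is f) (at x) v
      + b * frechet_derivative (iter_pd is g) (at x) v)"
    by (rule frechet_derivative_at[symmetric])
      (intro has_derivative_add has_derivative_mult_right df dg)
  finally show ?case by simp
qed simp

lemma C_inf_on_lincomb:
  fixes f g :: "real^'n \<Rightarrow> real"
  assumes f: "C_inf_on (-{0}) f" and g: "C_inf_on (-{0}) g"
  shows "C_inf_on (-{0}) (\<lambda>y. a * f y + b * g y)"
  unfolding C_inf_on_def
proof (intro allI ballI)
  fix "is" and x :: "real^'n" assume x: "x \<in> -{0}"
  have "iter_pd is f differentiable at x" "iter_pd is g differentiable at x"
    using f g x unfolding C_inf_on_def by blast+
  then have dd: "(\<lambda>y. a * iter_pd is f y + b * iter_pd is g y) differentiable at x"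
    by (intro differentiable_add differentiable_mult differentiable_const)
  have eq: "iter_pd is (\<lambda>y. a * f y + b * g y) y = a * iter_pd is f y + b * iter_pd is g y"
    if "y \<in> -{0}" for y
    using iter_pd_lincomb[OF f g] that by simp
  show "iter_pd is (\<lambda>y. a * f y + b * g y) differentiable at x"
    by (rule differentiable_cong_open[OF _ x eq dd]) (simp add: open_Compl)
qed

lemma smooth_sphere_C_inf_on: "f \<in> smooth_sphere \<Longrightarrow> C_inf_on (-{0}) (radial_ext f)"
  unfolding smooth_sphere_def by (simp add: Compl_eq_Diff_UNIV)

lemma smooth_sphere_lincomb:
  assumes "f \<in> smooth_sphere" "g \<in> smooth_sphere"
  shows "(\<lambda>y. a * f y + b * g y) \<in> smooth_sphere"
proof -
  have "radial_ext (\<lambda>y. a * f y + b * g y) = (\<lambda>x. a * radial_ext f x + b * radial_ext g x)"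
    by (simp add: radial_ext_def fun_eq_iff)
  with assms C_inf_on_lincomb[OF smooth_sphere_C_inf_on smooth_sphere_C_inf_on, of f g a b]
  show ?thesis unfolding smooth_sphere_def by (simp add: Compl_eq_Diff_UNIV)
qed

lemma smooth_sphere_continuous_on:
  assumes "f \<in> smooth_sphere"
  shows "continuous_on (sphere 0 1) f"
proof -
  have "radial_ext f differentiable at x" if "x \<in> sphere 0 1" for x
    using smooth_sphere_C_inf_on[OF assms] that unfolding C_inf_on_def
    by (metis ComplI iter_pd.simps(1) norm_zero singletonD zero_neq_one mem_sphere_0)
  then have "continuous_on (sphere 0 1) (radial_ext f)"
    by (intro continuous_at_imp_continuous_on ballI differentiable_imp_continuous_within)
  then show ?thesis
    by (rule continuous_on_eq) (simp add: radial_ext_def)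
qed

text \<open>The algebra generated by the partial derivatives of \<open>h\<close>, the coordinates and \<open>1 / norm x\<close>
  is closed under partial derivatives away from the origin; this gives smoothness of \<open>x\<^sub>i \<cdot> u\<close>
  without a general Leibniz rule for \<open>iter_pd\<close>.\<close>

inductive_set deriv_alg :: "(real^'n \<Rightarrow> real) \<Rightarrow> (real^'n \<Rightarrow> real) set" for h where
  iter_pd: "iter_pd is h \<in> deriv_alg h"
| const: "(\<lambda>x. c) \<in> deriv_alg h"
| coord: "(\<lambda>x. x $ k) \<in> deriv_alg h"
| inverse_norm: "(\<lambda>x. 1 / norm x) \<in> deriv_alg h"
| add: "f \<in> deriv_alg h \<Longrightarrow> g \<in> deriv_alg h \<Longrightarrow> (\<lambda>x. f x + g x) \<in> deriv_alg h"
| mult: "f \<in> deriv_alg h \<Longrightarrow> g \<in> deriv_alg h \<Longrightarrow> (\<lambda>x. f x * g x) \<in> deriv_alg h"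

lemma inverse_norm_has_derivative:
  assumes "(x::real^'n) \<noteq> 0"
  shows "((\<lambda>x. 1 / norm x) has_derivative (\<lambda>v. - (x \<bullet> v) / norm x ^ 3)) (at x)"
proof -
  have "((\<lambda>x. 1 / norm x) has_derivative
      (\<lambda>v. - 1 * (inverse (norm x) * (v \<bullet> sgn x) * inverse (norm x)) + 0 / norm x)) (at x)"
    using has_derivative_divide[OF has_derivative_const has_derivative_norm[OF assms], of 1] assms
    by simp
  then show ?thesis
    by (rule has_derivative_eq_rhs)
      (use assms in \<open>auto simp: fun_eq_iff sgn_div_norm field_simps power3_eq_cube inner_commute\<close>)
qed

definition partials_in :: "(real^'n \<Rightarrow> real) set \<Rightarrow> (real^'n \<Rightarrow> real) \<Rightarrow> bool" where
  "partials_in A f \<longleftrightarrow> (\<forall>x. x \<noteq> 0 \<longrightarrow> f differentiable (at x)) \<and>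
     (\<forall>i. \<exists>g\<in>A. \<forall>x. x \<noteq> 0 \<longrightarrow> frechet_derivative f (at x) (axis i 1) = g x)"

lemma partials_in_has_derivative:
  assumes "\<And>x. x \<noteq> 0 \<Longrightarrow> (f has_derivative D x) (at x)"
    and "\<And>i. \<exists>g\<in>A. \<forall>x. x \<noteq> 0 \<longrightarrow> D x (axis i 1) = g x"
  shows "partials_in A f"
  unfolding partials_in_def
  using assms frechet_derivative_at[OF assms(1)] by (auto simp: differentiable_def)

lemma partials_in_deriv_alg:
  assumes C: "C_inf_on (-{0}) h" and "f \<in> deriv_alg h"
  shows "partials_in (deriv_alg h) f"
  using assms(2)
proof (induction rule: deriv_alg.induct)
  case (iter_pd "is")
  show ?case
    unfolding partials_in_def using C deriv_alg.iter_pd[of "i # is" h for i]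
    by (fastforce simp: C_inf_on_def)
next
  case (const c)
  show ?case
    by (rule partials_in_has_derivative[OF has_derivative_const]) (auto intro: deriv_alg.const)
next
  case (coord k)
  show ?case
    by (rule partials_in_has_derivative[OF bounded_linear_imp_has_derivative[OF bounded_linear_vec_nth]])
      (auto intro: deriv_alg.const)
next
  case inverse_norm
  show ?case
  proof (rule partials_in_has_derivative[OF inverse_norm_has_derivative])
    fix i
    show "\<exists>g\<in>deriv_alg h. \<forall>x. x \<noteq> 0 \<longrightarrow> - (x \<bullet> axis i 1) / norm x ^ 3 = g x"
    proof (rule bexI)
      show "(\<lambda>x. - 1 * x $ i * (1 / norm x * (1 / norm x * (1 / norm x)))) \<in> deriv_alg h"
        by (intro deriv_alg.intros)
    qed (simp add: inner_axis power3_eq_cube)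
  qed
next
  case (add f g)
  show ?case
  proof (rule partials_in_has_derivative)
    show "((\<lambda>x. f x + g x) has_derivative
        (\<lambda>v. frechet_derivative f (at x) v + frechet_derivative g (at x) v)) (at x)"
      if "x \<noteq> 0" for x
      using add.IH that by (intro has_derivative_add frechet_derivative_works[THEN iffD1]) (auto simp: partials_in_def)
    fix i
    obtain f' g' where "f' \<in> deriv_alg h" "\<forall>x. x \<noteq> 0 \<longrightarrow> frechet_derivative f (at x) (axis i 1) = f' x"
      and "g' \<in> deriv_alg h" "\<forall>x. x \<noteq> 0 \<longrightarrow> frechet_derivative g (at x) (axis i 1) = g' x"
      using add.IH unfolding partials_in_def by meson
    then show "\<exists>k\<in>deriv_alg h. \<forall>x. x \<noteq> 0 \<longrightarrow>
        frechet_derivative f (at x) (axis i 1) + frechet_derivative g (at x) (axis i 1) = k x"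
      by (intro bexI[of _ "\<lambda>x. f' x + g' x"] deriv_alg.add) auto
  qed
next
  case (mult f g)
  show ?case
  proof (rule partials_in_has_derivative)
    show "((\<lambda>x. f x * g x) has_derivative
        (\<lambda>v. f x * frechet_derivative g (at x) v + frechet_derivative f (at x) v * g x)) (at x)"
      if "x \<noteq> 0" for x
      using mult.IH that by (intro has_derivative_mult frechet_derivative_works[THEN iffD1]) (auto simp: partials_in_def)
    fix i
    obtain f' g' where "f' \<in> deriv_alg h" "\<forall>x. x \<noteq> 0 \<longrightarrow> frechet_derivative f (at x) (axis i 1) = f' x"
      and "g' \<in> deriv_alg h" "\<forall>x. x \<noteq> 0 \<longrightarrow> frechet_derivative g (at x) (axis i 1) = g' x"
      using mult.IH unfolding partials_in_def by meson
    then show "\<exists>k\<in>deriv_alg h. \<forall>x. x \<noteq> 0 \<longrightarrow>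
        f x * frechet_derivative g (at x) (axis i 1) + frechet_derivative f (at x) (axis i 1) * g x = k x"
      using mult.hyps by (intro bexI[of _ "\<lambda>x. f x * g' x + f' x * g x"] deriv_alg.add deriv_alg.mult) auto
  qed
qed

lemma deriv_alg_iter_pd:
  assumes C: "C_inf_on (-{0}) h" and f: "f \<in> deriv_alg h"
  shows "\<exists>g\<in>deriv_alg h. \<forall>x. x \<noteq> 0 \<longrightarrow> iter_pd is f x = g x"
proof (induction "is")
  case (Cons i "is")
  then obtain g where g: "g \<in> deriv_alg h" "\<forall>x. x \<noteq> 0 \<longrightarrow> iter_pd is f x = g x" by blast
  obtain g' where g': "g' \<in> deriv_alg h" "\<forall>x. x \<noteq> 0 \<longrightarrow> frechet_derivative g (at x) (axis i 1) = g' x"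
    using partials_in_deriv_alg[OF C g(1)] unfolding partials_in_def by blast
  have "frechet_derivative (iter_pd is f) (at x) = frechet_derivative g (at x)" if "x \<noteq> 0" for x
    using g that by (intro frechet_derivative_cong_open[of "-{0}"]) (auto simp: open_Compl)
  with g' show ?case by auto
qed (use f in auto)

lemma C_inf_on_deriv_alg:
  fixes h f :: "real^'n \<Rightarrow> real"
  assumes C: "C_inf_on (-{0}) h" and g: "g \<in> deriv_alg h" and fg: "\<And>x. x \<noteq> 0 \<Longrightarrow> f x = g x"
  shows "C_inf_on (-{0}) f"
  unfolding C_inf_on_def
proof (intro allI ballI)
  fix "is" and x :: "real^'n" assume x: "x \<in> -{0}"
  obtain k where k: "k \<in> deriv_alg h" "\<forall>x. x \<noteq> 0 \<longrightarrow> iter_pd is g x = k x"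
    using deriv_alg_iter_pd[OF C g] by blast
  have eq: "iter_pd is f y = k y" if "y \<in> -{0}" for y
    using iter_pd_cong_open[of "-{0}" f g] fg k that by (auto simp: open_Compl)
  have "k differentiable at x"
    using partials_in_deriv_alg[OF C k(1)] x unfolding partials_in_def by auto
  from differentiable_cong_open[OF _ x eq this] show "iter_pd is f differentiable at x"
    by (simp add: open_Compl)
qed

lemma smooth_sphere_coord_mult:
  assumes "u \<in> smooth_sphere"
  shows "(\<lambda>x. x $ i * u x) \<in> smooth_sphere"
proof -
  have "(\<lambda>x. (x $ i * (1 / norm x)) * iter_pd [] (radial_ext u) x) \<in> deriv_alg (radial_ext u)"
    by (intro deriv_alg.intros)
  then have "C_inf_on (-{0}) (radial_ext (\<lambda>x. x $ i * u x))"
    by (rule C_inf_on_deriv_alg[OF smooth_sphere_C_inf_on[OF assms]])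
      (simp add: radial_ext_def divide_inverse)
  then show ?thesis
    using assms unfolding smooth_sphere_def by (simp add: Compl_eq_Diff_UNIV)
qed

lemma iter_pd_bounded_on_sphere:
  fixes f :: "real^'n \<Rightarrow> real"
  assumes C: "C_inf_on (-{0}) f"
  obtains M where "\<And>is x. length is \<le> m \<Longrightarrow> x \<in> sphere 0 1 \<Longrightarrow> \<bar>iter_pd is f x\<bar> \<le> M"
proof -
  have "\<exists>B. \<forall>x\<in>sphere 0 1. \<bar>iter_pd is f x\<bar> \<le> B" for "is"
  proof -
    have "continuous_on (sphere 0 1) (iter_pd is f)"
    proof (intro continuous_at_imp_continuous_on ballI differentiable_imp_continuous_within)
      fix x :: "real^'n" assume "x \<in> sphere 0 1"
      then have "x \<in> -{0}" by auto
      with C show "iter_pd is f differentiable at x" unfolding C_inf_on_def by blast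
    qed
    from compact_imp_bounded[OF compact_continuous_image[OF this compact_sphere]]
    show ?thesis unfolding bounded_iff by auto
  qed
  then obtain B where B: "\<And>is x. x \<in> sphere 0 1 \<Longrightarrow> \<bar>iter_pd is f x\<bar> \<le> B is"
    by metis
  let ?S = "{xs :: 'n list. length xs \<le> m}"
  have "finite ?S"
    using finite_lists_length_le[of "UNIV :: 'n set" m] by simp
  show ?thesis
  proof (rule that[of "Max (B ` ?S)"])
    fix "is" :: "'n list" and x :: "real^'n" assume "length is \<le> m" "x \<in> sphere 0 1"
    then have "B is \<le> Max (B ` ?S)"
      using \<open>finite ?S\<close> by (intro Max_ge) auto
    with B[OF \<open>x \<in> sphere 0 1\<close>] show "\<bar>iter_pd is f x\<bar> \<le> Max (B ` ?S)"
      by (rule order_trans)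
  qed
qed

lemma eventually_cm_close:
  fixes u w :: "real^'n \<Rightarrow> real"
  assumes u: "u \<in> smooth_sphere" and w: "w \<in> smooth_sphere" and "\<epsilon> > 0"
    and a: "(a \<longlongrightarrow> 1) F" and b: "(b \<longlongrightarrow> 0) F"
  shows "eventually (\<lambda>s. cm_close m \<epsilon> u (\<lambda>x. a s * u x + b s * w x)) F"
proof -
  note Cu = smooth_sphere_C_inf_on[OF u] and Cw = smooth_sphere_C_inf_on[OF w]
  obtain Mu where Mu: "\<And>is x. length is \<le> m \<Longrightarrow> x \<in> sphere 0 1 \<Longrightarrow> \<bar>iter_pd is (radial_ext u) x\<bar> \<le> Mu"
    using iter_pd_bounded_on_sphere[OF Cu] by blast
  obtain Mw where Mw: "\<And>is x. length is \<le> m \<Longrightarrow> x \<in> sphere 0 1 \<Longrightarrow> \<bar>iter_pd is (radial_ext w) x\<bar> \<le> Mw"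
    using iter_pd_bounded_on_sphere[OF Cw] by blast
  have "((\<lambda>s. \<bar>a s - 1\<bar> * \<bar>Mu\<bar> + \<bar>b s\<bar> * \<bar>Mw\<bar>) \<longlongrightarrow> \<bar>1 - 1\<bar> * \<bar>Mu\<bar> + \<bar>0\<bar> * \<bar>Mw\<bar>) F"
    by (intro tendsto_intros a b)
  then have "eventually (\<lambda>s. \<bar>a s - 1\<bar> * \<bar>Mu\<bar> + \<bar>b s\<bar> * \<bar>Mw\<bar> < \<epsilon>) F"
    using \<open>\<epsilon> > 0\<close> by (auto dest: order_tendstoD(2))
  then show ?thesis
  proof eventually_elim
    case (elim s)
    show ?case
      unfolding cm_close_def
    proof (intro allI impI ballI)
      fix "is" :: "'n list" and x :: "real^'n" assume l: "length is \<le> m" and x: "x \<in> sphere 0 1"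
      have re: "radial_ext (\<lambda>y. a s * u y + b s * w y - u y)
          = (\<lambda>x. (a s - 1) * radial_ext u x + b s * radial_ext w x)"
        unfolding radial_ext_def by (simp add: fun_eq_iff algebra_simps)
      have "x \<noteq> 0" using x by auto
      then have "iter_pd is (radial_ext (\<lambda>y. a s * u y + b s * w y - u y)) x
          = (a s - 1) * iter_pd is (radial_ext u) x + b s * iter_pd is (radial_ext w) x"
        unfolding re by (rule iter_pd_lincomb[OF Cu Cw])
      also have "\<bar>\<dots>\<bar> \<le> \<bar>a s - 1\<bar> * \<bar>Mu\<bar> + \<bar>b s\<bar> * \<bar>Mw\<bar>"
        using Mu[OF l x] Mw[OF l x]
        by (intro order_trans[OF abs_triangle_ineq] add_mono) (auto simp: abs_mult intro!: mult_left_mono)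
      finally show "\<bar>iter_pd is (radial_ext (\<lambda>y. a s * u y + b s * w y - u y)) x\<bar> < \<epsilon>"
        using elim by linarith
    qed
  qed
qed

section \<open>The multilinear form of a formally self-adjoint operator\<close>

lemma binomial_sum_Suc:
  fixes A :: "nat \<Rightarrow> real"
  shows "(\<Sum>m\<le>Suc k. real (Suc k choose m) * t ^ m * A m) =
    (\<Sum>m\<le>k. real (k choose m) * t ^ m * A m) + (\<Sum>m\<le>k. real (k choose m) * t ^ Suc m * A (Suc m))"
proof -
  have "(\<Sum>m\<le>Suc k. real (Suc k choose m) * t ^ m * A m)
      = A 0 + (\<Sum>m\<le>k. real (k choose Suc m) * t ^ Suc m * A (Suc m))
      + (\<Sum>m\<le>k. real (k choose m) * t ^ Suc m * A (Suc m))"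
    by (subst sum.atMost_Suc_shift) (simp add: sum.distrib algebra_simps)
  also have "A 0 + (\<Sum>m\<le>k. real (k choose Suc m) * t ^ Suc m * A (Suc m))
      = (\<Sum>m\<le>k. real (k choose m) * t ^ m * A m)"
  proof (cases k)
    case (Suc k')
    have "(\<Sum>m\<le>k. real (k choose m) * t ^ m * A m)
        = A 0 + (\<Sum>m\<le>k'. real (k choose Suc m) * t ^ Suc m * A (Suc m))"
      unfolding Suc by (subst sum.atMost_Suc_shift) simp
    moreover have "(\<Sum>m\<le>k. real (k choose Suc m) * t ^ Suc m * A (Suc m))
        = (\<Sum>m\<le>k'. real (k choose Suc m) * t ^ Suc m * A (Suc m))"
      unfolding Suc by (simp add: binomial_eq_0)
    ultimately show ?thesis by simp
  qed simp
  finally show ?thesis .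
qed

locale fsa_operator =
  fixes j :: nat and L :: "(real^'n \<Rightarrow> real) list \<Rightarrow> real^'n \<Rightarrow> real"
  assumes fsa: "formally_self_adjoint j L"
begin

lemma L_smooth: "length us = j \<Longrightarrow> set us \<subseteq> smooth_sphere \<Longrightarrow> L us \<in> smooth_sphere"
  using fsa unfolding formally_self_adjoint_def j_diffop_def by blast

lemma sa_form_mset_eq:
  "length us = j + 1 \<Longrightarrow> set us \<subseteq> smooth_sphere \<Longrightarrow> mset vs = mset us \<Longrightarrow> sa_form L vs = sa_form L us"
  using fsa unfolding formally_self_adjoint_def by blast

lemma sa_form_lincomb_head:
  assumes "f \<in> smooth_sphere" "g \<in> smooth_sphere" "length rest = j" "set rest \<subseteq> smooth_sphere"
  shows "sa_form L ((\<lambda>y. a * f y + b * g y) # rest) = a * sa_form L (f # rest) + b * sa_form L (g # rest)"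
proof -
  have cL: "continuous_on (sphere 0 1) (L rest)"
    by (rule smooth_sphere_continuous_on[OF L_smooth[OF assms(3,4)]])
  have cf: "continuous_on (sphere 0 1) (\<lambda>y. a * (f y * L rest y))"
    and cg: "continuous_on (sphere 0 1) (\<lambda>y. b * (g y * L rest y))"
    by (intro continuous_intros smooth_sphere_continuous_on assms cL)+
  have "sa_form L ((\<lambda>y. a * f y + b * g y) # rest) = sphere_int (\<lambda>y. a * (f y * L rest y) + b * (g y * L rest y))"
    unfolding sa_form_def by (simp add: algebra_simps)
  also have "\<dots> = a * sa_form L (f # rest) + b * sa_form L (g # rest)"
    unfolding sphere_int_add[OF cf cg] sphere_int_cmult sa_form_def by simp
  finally show ?thesis .
qed

lemma sa_form_lincomb_slot:
  assumes "f \<in> smooth_sphere" "g \<in> smooth_sphere" "length xs + length ys = j"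
    "set xs \<subseteq> smooth_sphere" "set ys \<subseteq> smooth_sphere"
  shows "sa_form L (xs @ (\<lambda>y. a * f y + b * g y) # ys)
    = a * sa_form L (xs @ f # ys) + b * sa_form L (xs @ g # ys)"
proof -
  have move: "sa_form L (xs @ h # ys) = sa_form L (h # xs @ ys)" if "h \<in> smooth_sphere" for h
    by (rule sa_form_mset_eq) (use assms that in auto)
  show ?thesis
    unfolding move[OF smooth_sphere_lincomb[OF assms(1,2)]] move[OF assms(1)] move[OF assms(2)]
    by (rule sa_form_lincomb_head) (use assms in auto)
qed

lemma sa_form_replicate_scale:
  assumes "f \<in> smooth_sphere" "set rest \<subseteq> smooth_sphere" "k + length rest = j + 1"
  shows "sa_form L (replicate k (\<lambda>y. c * f y) @ rest) = c ^ k * sa_form L (replicate k f @ rest)"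
  using assms(2,3)
proof (induction k arbitrary: rest)
  case (Suc k)
  have cf: "(\<lambda>y. c * f y) \<in> smooth_sphere"
    using smooth_sphere_lincomb[OF assms(1) assms(1), of c 0] by simp
  have "sa_form L (replicate (Suc k) (\<lambda>y. c * f y) @ rest)
      = c ^ k * sa_form L (replicate k f @ (\<lambda>y. c * f y + 0 * f y) # rest)"
    using Suc cf by (simp add: replicate_app_Cons_same[symmetric])
  also have "\<dots> = c ^ k * (c * sa_form L (replicate k f @ f # rest))"
    using Suc assms(1) by (subst sa_form_lincomb_slot) auto
  finally show ?case by (simp add: replicate_app_Cons_same)
qed simp

lemma sa_form_replicate_binomial:
  assumes f: "f \<in> smooth_sphere" and g: "g \<in> smooth_sphere"
  shows "set rest \<subseteq> smooth_sphere \<Longrightarrow> k + length rest = j + 1 \<Longrightarrow>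
    sa_form L (replicate k (\<lambda>y. f y + t * g y) @ rest) =
    (\<Sum>m\<le>k. real (k choose m) * t ^ m * sa_form L (replicate m g @ replicate (k - m) f @ rest))"
proof (induction k arbitrary: rest)
  case (Suc k)
  define z where "z = (\<lambda>y. 1 * f y + t * g y)"
  have z: "z \<in> smooth_sphere" unfolding z_def by (rule smooth_sphere_lincomb[OF f g])
  define A where "A m = sa_form L (replicate m g @ replicate (Suc k - m) f @ rest)" for m
  have step: "sa_form L (replicate m g @ replicate (k - m) f @ z # rest) = A m + t * A (Suc m)"
    if m: "m \<le> k" for m
  proof -
    have "sa_form L ((replicate m g @ replicate (k - m) f) @ z # rest)
        = 1 * sa_form L ((replicate m g @ replicate (k - m) f) @ f # rest)
        + t * sa_form L ((replicate m g @ replicate (k - m) f) @ g # rest)"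
      unfolding z_def by (rule sa_form_lincomb_slot) (use Suc.prems f g m in auto)
    moreover have "sa_form L ((replicate m g @ replicate (k - m) f) @ f # rest) = A m"
      using m by (simp add: A_def Suc_diff_le replicate_app_Cons_same)
    moreover have "sa_form L ((replicate m g @ replicate (k - m) f) @ g # rest) = A (Suc m)"
      unfolding A_def by (rule sa_form_mset_eq) (use Suc.prems f g m in auto)
    ultimately show ?thesis by simp
  qed
  have "sa_form L (replicate (Suc k) z @ rest) = sa_form L (replicate k z @ z # rest)"
    by (simp add: replicate_app_Cons_same)
  also have "\<dots> = (\<Sum>m\<le>k. real (k choose m) * t ^ m * (A m + t * A (Suc m)))"
    using Suc.IH[of "z # rest"] Suc.prems z step by (simp add: z_def)
  also have "\<dots> = (\<Sum>m\<le>Suc k. real (Suc k choose m) * t ^ m * A m)"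
    unfolding binomial_sum_Suc by (simp add: sum.distrib algebra_simps)
  finally show ?case by (simp add: z_def A_def)
qed simp

lemma energy_eq_sa_form: "energy j L z = sa_form L (replicate (j + 1) z)"
  unfolding energy_def sa_form_def by simp

lemma energy_scale:
  "z \<in> smooth_sphere \<Longrightarrow> energy j L (\<lambda>y. c * z y) = c ^ (j + 1) * energy j L z"
  using sa_form_replicate_scale[of z "[]" "j + 1" c] by (simp add: energy_eq_sa_form)

lemma energy_binomial:
  assumes "f \<in> smooth_sphere" "g \<in> smooth_sphere"
  shows "energy j L (\<lambda>y. f y + t * g y)
    = (\<Sum>m\<le>j + 1. real ((j + 1) choose m) * t ^ m * sa_form L (replicate m g @ replicate (j + 1 - m) f))"
  using sa_form_replicate_binomial[OF assms, of "[]" "j + 1" t] by (simp add: energy_eq_sa_form)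

end

section \<open>Second-order asymptotics at zero\<close>

lemma bigo_at_0_imp_local_bound:
  fixes f g :: "real \<Rightarrow> real"
  assumes "f \<in> O[at 0](g)" "f 0 = 0"
  obtains C \<delta> where "C > 0" "\<delta> > 0" "\<And>s. \<bar>s\<bar> < \<delta> \<Longrightarrow> \<bar>f s\<bar> \<le> C * \<bar>g s\<bar>"
proof -
  obtain C where C: "C > 0" "eventually (\<lambda>s. \<bar>f s\<bar> \<le> C * \<bar>g s\<bar>) (at 0)"
    using landau_o.bigE[OF assms(1)] by auto
  then obtain \<delta> where \<delta>: "\<delta> > 0" "\<And>s. s \<noteq> 0 \<Longrightarrow> \<bar>s\<bar> < \<delta> \<Longrightarrow> \<bar>f s\<bar> \<le> C * \<bar>g s\<bar>"
    unfolding eventually_at by (auto simp: dist_real_def)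
  show ?thesis
  proof (rule that[OF C(1) \<open>\<delta> > 0\<close>])
    fix s :: real assume "\<bar>s\<bar> < \<delta>"
    with \<delta> assms(2) C(1) show "\<bar>f s\<bar> \<le> C * \<bar>g s\<bar>" by (cases "s = 0") auto
  qed
qed

lemma bigo_at_0_compose:
  fixes f g h :: "real \<Rightarrow> real"
  assumes "f \<in> O[at 0](g)" "f 0 = 0" "(h \<longlongrightarrow> 0) F"
  shows "(\<lambda>x. f (h x)) \<in> O[F](\<lambda>x. g (h x))"
proof -
  obtain C \<delta> where "\<delta> > 0" "\<And>s. \<bar>s\<bar> < \<delta> \<Longrightarrow> \<bar>f s\<bar> \<le> C * \<bar>g s\<bar>"
    using bigo_at_0_imp_local_bound[OF assms(1,2)] by blast
  moreover have "eventually (\<lambda>x. \<bar>h x\<bar> < \<delta>) F"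
    using order_tendstoD(2)[OF tendsto_rabs_zero[OF assms(3)] \<open>\<delta> > 0\<close>] .
  ultimately show ?thesis by (intro bigoI[where c = C]) (auto elim!: eventually_mono)
qed

lemma powr_one_plus_taylor2_bigo:
  "(\<lambda>s::real. (1 + s) powr r - 1 - r * s - r * (r - 1) / 2 * s^2) \<in> O[at 0](\<lambda>s. s^3)"
  by real_asymp

lemma quadratic_approx_bigo:
  fixes f :: "real \<Rightarrow> real"
  assumes "(\<lambda>t. f t - A * t^2) \<in> O[at 0](\<lambda>t. t^3)"
  shows "f \<in> O[at 0](\<lambda>t. t^2)"
proof -
  have "(\<lambda>t::real. t^3) \<in> O[at 0](\<lambda>t. t^2)" by real_asymp
  with assms have "(\<lambda>t. (f t - A * t^2) + A * t^2) \<in> O[at 0](\<lambda>t. t^2)"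
    by (intro sum_in_bigo landau_o.big_trans[OF assms]) auto
  then show ?thesis by simp
qed

lemma bigo_square_tendsto_zero:
  fixes f :: "real \<Rightarrow> real"
  assumes "f \<in> O[at 0](\<lambda>t. t^2)"
  shows "(f \<longlongrightarrow> 0) (at 0)"
proof -
  have "(\<lambda>t::real. t^2) \<in> o[at 0](\<lambda>_. 1)" by real_asymp
  from smalloD_tendsto[OF landau_o.big_small_trans[OF assms this]] show ?thesis by simp
qed

lemma powr_second_order_bigo:
  fixes c :: "real \<Rightarrow> real"
  assumes c: "(\<lambda>t. c t - 1 - A * t^2) \<in> O[at 0](\<lambda>t. t^3)"
  shows "(\<lambda>t. c t powr q - 1 - q * A * t^2) \<in> O[at 0](\<lambda>t. t^3)"
proof -
  define y where "y t = c t - 1" for t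
  have y2: "y \<in> O[at 0](\<lambda>t. t^2)"
    using quadratic_approx_bigo[of y A] c unfolding y_def by simp
  have y0: "(y \<longlongrightarrow> 0) (at 0)" by (rule bigo_square_tendsto_zero[OF y2])
  have t4: "(\<lambda>t::real. t^4) \<in> O[at 0](\<lambda>t. t^3)" by real_asymp
  have t6: "(\<lambda>t::real. t^6) \<in> O[at 0](\<lambda>t. t^3)" by real_asymp
  have sq: "(\<lambda>t. y t ^ 2) \<in> O[at 0](\<lambda>t. t^3)"
    using landau_o.big_trans[OF landau_o.big_power[OF y2, of 2] ] t4 by (simp add: power_mult[symmetric])
  have cube: "(\<lambda>t. y t ^ 3) \<in> O[at 0](\<lambda>t. t^3)"
    using landau_o.big_trans[OF landau_o.big_power[OF y2, of 3] ] t6 by (simp add: power_mult[symmetric])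
  have taylor: "(\<lambda>t. (1 + y t) powr q - 1 - q * y t - q * (q - 1) / 2 * y t ^ 2) \<in> O[at 0](\<lambda>t. t^3)"
    using landau_o.big_trans[OF bigo_at_0_compose[OF powr_one_plus_taylor2_bigo _ y0] cube] by simp
  have "(\<lambda>t. ((1 + y t) powr q - 1 - q * y t - q * (q - 1) / 2 * y t ^ 2)
      + q * (c t - 1 - A * t^2) + q * (q - 1) / 2 * y t ^ 2) \<in> O[at 0](\<lambda>t. t^3)"
    using c sq by (intro sum_in_bigo(1)[OF sum_in_bigo(1)[OF taylor]]) auto
  also have "(\<lambda>t. ((1 + y t) powr q - 1 - q * y t - q * (q - 1) / 2 * y t ^ 2)
      + q * (c t - 1 - A * t^2) + q * (q - 1) / 2 * y t ^ 2) = (\<lambda>t. c t powr q - 1 - q * A * t^2)"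
    by (simp add: y_def algebra_simps)
  finally show ?thesis .
qed

lemma cubic_perturbation_quadratic_coeff_nonneg:
  fixes r :: "real \<Rightarrow> real"
  assumes ev: "eventually (\<lambda>t. a * t + b * t^2 + r t \<ge> 0) (at 0)"
    and r: "r \<in> O[at 0](\<lambda>t. t^3)"
  shows "b \<ge> 0"
proof -
  \<comment> \<open>approach 0 from the side on which the linear term is nonpositive\<close>
  obtain F where F: "F \<le> at 0" "F \<noteq> bot" "eventually (\<lambda>t. a * t \<le> 0 \<and> t \<noteq> 0) F"
  proof (cases "a \<ge> 0")
    case True
    show ?thesis
      by (rule that[of "at_left 0"]) (use True in \<open>auto simp: eventually_at_filter mult_le_0_iff intro: at_le\<close>)
  next
    case False
    show ?thesis
      by (rule that[of "at_right 0"]) (use False in \<open>auto simp: eventually_at_filter mult_le_0_iff intro: at_le\<close>)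
  qed
  have "(\<lambda>t::real. t^3) \<in> o[at 0](\<lambda>t. t^2)" by real_asymp
  then have "((\<lambda>t. r t / t^2) \<longlongrightarrow> 0) (at 0)"
    by (intro smalloD_tendsto landau_o.big_small_trans[OF r])
  then have "((\<lambda>t. r t / t^2) \<longlongrightarrow> 0) F" by (rule tendsto_mono[OF F(1)])
  then have lim: "((\<lambda>t. b + r t / t^2) \<longlongrightarrow> b) F"
    using tendsto_add[OF tendsto_const[of b]] by fastforce
  have "eventually (\<lambda>t. 0 \<le> b + r t / t^2) F"
    using filter_leD[OF F(1) ev] F(3)
  proof eventually_elim
    case (elim t)
    then have "0 \<le> (b * t^2 + r t) / t^2" by (intro divide_nonneg_pos) auto
    with elim show ?case by (simp add: add_divide_distrib)
  qed
  from tendsto_lowerbound[OF lim this F(2)] show ?thesis .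
qed

lemma polynomial_taylor2_bigo:
  fixes a :: "nat \<Rightarrow> real"
  assumes "N \<ge> 2"
  shows "(\<lambda>t. (\<Sum>m\<le>N. a m * t ^ m) - (a 0 + a 1 * t + a 2 * t^2)) \<in> O[at 0](\<lambda>t. t^3)"
proof -
  have "{..N} = {0, 1, 2} \<union> {3..N}" using assms by auto
  then have split: "(\<Sum>m\<le>N. a m * t ^ m) = a 0 + a 1 * t + a 2 * t^2 + (\<Sum>m\<in>{3..N}. a m * t ^ m)"
    for t :: real by (simp add: sum.union_disjoint power2_eq_square)
  have "(\<lambda>t::real. t ^ m) \<in> O[at 0](\<lambda>t. t^3)" if "m \<ge> 3" for m
  proof (rule bigoI[where c = 1])
    have "eventually (\<lambda>t::real. \<bar>t\<bar> \<le> 1) (at 0)"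
      using eventually_at[of "\<lambda>t::real. \<bar>t\<bar> \<le> 1" 0 UNIV] by (auto intro!: exI[of _ 1] simp: dist_real_def)
    then show "eventually (\<lambda>t::real. norm (t ^ m) \<le> 1 * norm (t^3)) (at 0)"
      by eventually_elim (use that in \<open>auto simp: power_abs intro: power_decreasing\<close>)
  qed
  then have "(\<lambda>t. \<Sum>m\<in>{3..N}. a m * t ^ m) \<in> O[at 0](\<lambda>t. t^3)"
    by (intro big_sum_in_bigo) auto
  then show ?thesis unfolding split by simp
qed

section \<open>Second variation at a constrained local minimizer\<close>

lemma sphere_int_powr_coord_perturbation_eq:
  fixes u :: "real^'n \<Rightarrow> real" and t p :: real and i :: 'n
  assumes u: "continuous_on (sphere 0 1) u" and pos: "\<And>x. x \<in> sphere 0 1 \<Longrightarrow> u x > 0"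
    and "\<bar>t\<bar> < 1"
  defines "R \<equiv> \<lambda>x. u x powr p * ((1 + t * x $ i) powr p - 1 - p * (t * x $ i) - p * (p - 1) / 2 * (t * x $ i)^2)"
  shows "sphere_int (\<lambda>x. \<bar>u x + t * (x $ i * u x)\<bar> powr p)
    = sphere_int (\<lambda>x. u x powr p) + (p * t) * sphere_int (\<lambda>x. x $ i * u x powr p)
      + (p * (p - 1) / 2 * t^2) * sphere_int (\<lambda>x. (x $ i)^2 * u x powr p) + sphere_int R"
proof -
  define k1 k2 where "k1 = p * t" and "k2 = p * (p - 1) / 2 * t^2"
  have small: "1 + t * x $ i > 0" if "x \<in> sphere 0 1" for x :: "real^'n"
  proof -
    have "\<bar>t\<bar> * \<bar>x $ i\<bar> < 1"
      using component_le_norm_cart[of x i] that \<open>\<bar>t\<bar> < 1\<close>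
      by (intro order_le_less_trans[OF mult_left_le]) auto
    then have "\<bar>t * x $ i\<bar> < 1" by (simp add: abs_mult)
    then show ?thesis by arith
  qed
  have up: "continuous_on (sphere 0 1) (\<lambda>x. u x powr p)"
    using pos by (intro continuous_intros u) force
  have cR: "continuous_on (sphere 0 1) R"
    unfolding R_def using small pos by (intro continuous_intros u up) force+
  have pw: "\<bar>u x + t * (x $ i * u x)\<bar> powr p
      = u x powr p + k1 * (x $ i * u x powr p) + k2 * ((x $ i)^2 * u x powr p) + R x"
    if "x \<in> sphere 0 1" for x
  proof -
    have "u x + t * (x $ i * u x) = u x * (1 + t * x $ i)"
      by (simp add: algebra_simps)
    with pos[OF that] small[OF that] have "\<bar>u x + t * (x $ i * u x)\<bar> = u x * (1 + t * x $ i)"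
      by simp
    also have "(u x * (1 + t * x $ i)) powr p = u x powr p * (1 + t * x $ i) powr p"
      using pos[OF that] small[OF that] by (auto intro!: powr_mult)
    finally show ?thesis
      by (simp add: R_def k1_def k2_def algebra_simps power2_eq_square)
  qed
  have expansion: "continuous_on (sphere 0 1) (\<lambda>x. u x powr p + k1 * (x $ i * u x powr p)
      + k2 * ((x $ i)^2 * u x powr p) + R x)"
    by (intro continuous_intros up cR)
  have "sphere_int (\<lambda>x. \<bar>u x + t * (x $ i * u x)\<bar> powr p)
      = sphere_int (\<lambda>x. u x powr p + k1 * (x $ i * u x powr p) + k2 * ((x $ i)^2 * u x powr p) + R x)"
    using continuous_on_eq[OF expansion, of "\<lambda>x. \<bar>u x + t * (x $ i * u x)\<bar> powr p"] pw
    by (intro sphere_int_cong[OF _ expansion pw]) auto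
  also have "\<dots> = sphere_int (\<lambda>x. u x powr p) + k1 * sphere_int (\<lambda>x. x $ i * u x powr p)
      + k2 * sphere_int (\<lambda>x. (x $ i)^2 * u x powr p) + sphere_int R"
    by (simp add: sphere_int_add sphere_int_cmult continuous_intros up cR)
  finally show ?thesis unfolding k1_def k2_def .
qed

lemma sphere_int_powr_coord_perturbation:
  fixes u :: "real^'n \<Rightarrow> real"
  assumes u: "continuous_on (sphere 0 1) u" and pos: "\<And>x. x \<in> sphere 0 1 \<Longrightarrow> u x > 0"
    and mom: "sphere_int (\<lambda>x. x $ i * u x powr p) = 0"
  shows "(\<lambda>t. sphere_int (\<lambda>x. \<bar>u x + t * (x $ i * u x)\<bar> powr p) - sphere_int (\<lambda>x. u x powr p)
      - p * (p - 1) / 2 * sphere_int (\<lambda>x. (x $ i)^2 * u x powr p) * t^2) \<in> O[at 0](\<lambda>t. t^3)"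
proof -
  define \<theta> where "\<theta> s = (1 + s) powr p - 1 - p * s - p * (p - 1) / 2 * s^2" for s :: real
  obtain C \<delta> where "C > 0" "\<delta> > 0" and \<theta>: "\<And>s. \<bar>s\<bar> < \<delta> \<Longrightarrow> \<bar>\<theta> s\<bar> \<le> C * \<bar>s ^ 3\<bar>"
    using bigo_at_0_imp_local_bound[OF powr_one_plus_taylor2_bigo[of p]] unfolding \<theta>_def by auto
  have up: "continuous_on (sphere 0 1) (\<lambda>x. u x powr p)"
    using pos by (intro continuous_intros u) force
  have "eventually (\<lambda>t::real. t \<in> ball 0 (min \<delta> 1)) (at 0)"
    using \<open>\<delta> > 0\<close> by (intro eventually_at_in_open') auto
  then have "eventually (\<lambda>t. \<bar>sphere_int (\<lambda>x. \<bar>u x + t * (x $ i * u x)\<bar> powr p) - sphere_int (\<lambda>x. u x powr p)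
      - p * (p - 1) / 2 * sphere_int (\<lambda>x. (x $ i)^2 * u x powr p) * t^2\<bar>
      \<le> C * sphere_int (\<lambda>x. u x powr p) * \<bar>t^3\<bar>) (at 0)"
  proof eventually_elim
    case (elim t)
    then have "\<bar>t\<bar> < 1" by simp
    have small: "\<bar>x $ i\<bar> \<le> 1" "\<bar>t * x $ i\<bar> < min \<delta> 1" if "x \<in> sphere 0 1" for x :: "real^'n"
      using component_le_norm_cart[of x i] that elim
      by (auto simp: abs_mult intro: order_le_less_trans[OF mult_left_le])
    have "\<bar>sphere_int (\<lambda>x. u x powr p * \<theta> (t * x $ i))\<bar> \<le> sphere_int (\<lambda>x. (C * \<bar>t^3\<bar>) * u x powr p)"
    proof (rule sphere_int_abs_le)
      fix x :: "real^'n" assume x: "x \<in> sphere 0 1"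
      have "\<bar>\<theta> (t * x $ i)\<bar> \<le> C * \<bar>(t * x $ i) ^ 3\<bar>"
        using \<theta> small(2)[OF x] by simp
      also have "\<dots> \<le> C * \<bar>t^3\<bar>"
        using small(1)[OF x] \<open>C > 0\<close>
        by (auto simp: abs_mult power_mult_distrib power_abs intro!: mult_left_le power_le_one)
      finally show "\<bar>u x powr p * \<theta> (t * x $ i)\<bar> \<le> C * \<bar>t^3\<bar> * u x powr p"
        by (simp add: abs_mult mult_left_mono mult.commute)
    next
      show "continuous_on (sphere 0 1) (\<lambda>x. u x powr p * \<theta> (t * x $ i))"
        unfolding \<theta>_def using small pos by (intro continuous_intros u up) (force simp: abs_less_iff)+
    qed (intro continuous_intros up)
    then show ?case
      using sphere_int_powr_coord_perturbation_eq[OF u pos \<open>\<bar>t\<bar> < 1\<close>, of i] mom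
      unfolding sphere_int_cmult \<theta>_def by (simp add: algebra_simps)
  qed
  then show ?thesis
    by (intro bigoI[where c = "C * sphere_int (\<lambda>x. u x powr p)"]) simp
qed

lemma rescale_in_constraint_set:
  fixes z :: "real^'n \<Rightarrow> real" and p :: real
  defines "c \<equiv> sphere_int (\<lambda>x. \<bar>z x\<bar> powr p) / omega TYPE('n)"
  assumes z: "z \<in> smooth_sphere" and "p > 0" and "c > 0"
  shows "(\<lambda>x. c powr (- 1 / p) * z x) \<in> constraint_set p"
proof -
  have "(c powr (- 1 / p)) powr p = c powr (- 1 / p * p)"
    by (rule powr_powr)
  then have "(c powr (- 1 / p)) powr p = inverse c"
    using \<open>p > 0\<close> \<open>c > 0\<close> by (simp add: powr_minus)
  then have "sphere_int (\<lambda>x. \<bar>c powr (- 1 / p) * z x\<bar> powr p) = inverse c * sphere_int (\<lambda>x. \<bar>z x\<bar> powr p)"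
    by (simp add: abs_mult powr_mult sphere_int_cmult)
  also have "\<dots> = omega TYPE('n)"
    using \<open>c > 0\<close> omega_pos[where 'n = 'n] unfolding c_def by (simp add: zero_less_divide_iff)
  finally show ?thesis
    unfolding constraint_set_def using smooth_sphere_lincomb[OF z z, of "c powr (- 1 / p)" 0] by simp
qed

locale constrained_local_min =
  fsa_operator j L for j and L :: "(real^'n \<Rightarrow> real) list \<Rightarrow> real^'n \<Rightarrow> real" +
  fixes p :: real and u :: "real^'n \<Rightarrow> real"
  assumes p_pos: "p > 0"
    and local_min: "local_minimizer (energy j L) (constraint_set p) u"
begin

lemma u_smooth: "u \<in> smooth_sphere"
  and u_constraint: "sphere_int (\<lambda>x. \<bar>u x\<bar> powr p) = omega TYPE('n)"
  using local_min unfolding local_minimizer_def constraint_set_def by auto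

lemma u_powr_continuous_on:
  "(\<And>x. x \<in> sphere 0 1 \<Longrightarrow> u x > 0) \<Longrightarrow> continuous_on (sphere 0 1) (\<lambda>x. u x powr p)"
  by (intro continuous_intros smooth_sphere_continuous_on[OF u_smooth]) force

lemma sphere_int_u_powr:
  assumes "\<And>x. x \<in> sphere 0 1 \<Longrightarrow> u x > 0"
  shows "sphere_int (\<lambda>x. u x powr p) = omega TYPE('n)"
proof -
  have eq: "u x powr p = \<bar>u x\<bar> powr p" if "x \<in> sphere 0 1" for x
    using assms[OF that] by simp
  note c = u_powr_continuous_on[OF assms]
  show ?thesis
    unfolding u_constraint[symmetric] using eq
    by (intro sphere_int_cong[OF c continuous_on_eq[OF c]]) auto
qed

lemma energy_ge_rescaled_perturbation:
  fixes w :: "real^'n \<Rightarrow> real"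
  defines "c \<equiv> \<lambda>t. sphere_int (\<lambda>x. \<bar>u x + t * w x\<bar> powr p) / omega TYPE('n)"
  assumes w: "w \<in> smooth_sphere" and c1: "(c \<longlongrightarrow> 1) (at 0)"
  shows "eventually (\<lambda>t. c t powr ((j + 1) / p) * energy j L u \<le> energy j L (\<lambda>x. u x + t * w x)) (at 0)"
proof -
  define r where "r t = c t powr (- 1 / p)" for t
  obtain m \<epsilon> where "\<epsilon> > 0"
    and min: "\<And>v. v \<in> constraint_set p \<Longrightarrow> cm_close m \<epsilon> u v \<Longrightarrow> energy j L u \<le> energy j L v"
    using local_min unfolding local_minimizer_def by blast
  have r1: "(r \<longlongrightarrow> 1) (at 0)"
    using tendsto_powr[OF c1 tendsto_const[of "- 1 / p"]] unfolding r_def by simp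
  have "((\<lambda>t. r t * t) \<longlongrightarrow> 1 * 0) (at 0)"
    by (intro tendsto_mult r1 tendsto_ident_at)
  then have "eventually (\<lambda>t. cm_close m \<epsilon> u (\<lambda>x. r t * u x + r t * t * w x)) (at 0)"
    by (intro eventually_cm_close u_smooth w \<open>\<epsilon> > 0\<close> r1) simp
  moreover have "eventually (\<lambda>t. c t > 0) (at 0)"
    using order_tendstoD(1)[OF c1, of 0] by simp
  ultimately show ?thesis
  proof eventually_elim
    case (elim t)
    define z where "z x = 1 * u x + t * w x" for x
    have z: "z \<in> smooth_sphere"
      unfolding z_def by (intro smooth_sphere_lincomb u_smooth w)
    have "(\<lambda>x. r t * z x) \<in> constraint_set p" "cm_close m \<epsilon> u (\<lambda>x. r t * z x)"
      using rescale_in_constraint_set[OF z p_pos] elim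
      by (simp_all add: r_def c_def z_def algebra_simps)
    then have "energy j L u \<le> r t ^ (j + 1) * energy j L z"
      using min energy_scale[OF z] by metis
    also have "r t ^ (j + 1) = r t powr real (j + 1)"
      using elim powr_realpow[of "r t" "j + 1"] unfolding r_def by simp
    also have "\<dots> = inverse (c t powr ((j + 1) / p))"
      unfolding r_def powr_powr by (simp add: powr_minus)
    finally show ?case
      using elim by (simp add: z_def field_simps)
  qed
qed

lemma second_variation_ge:
  fixes w :: "real^'n \<Rightarrow> real"
  defines "c \<equiv> \<lambda>t. sphere_int (\<lambda>x. \<bar>u x + t * w x\<bar> powr p) / omega TYPE('n)"
  assumes "j > 0" and w: "w \<in> smooth_sphere"
    and c: "(\<lambda>t. c t - 1 - A * t^2) \<in> O[at 0](\<lambda>t. t^3)"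
  shows "(j + 1) / p * A * energy j L u \<le> real ((j + 1) choose 2) * sa_form L (w # w # replicate (j - 1) u)"
proof -
  define q where "q = (j + 1) / p"
  define E0 where "E0 = energy j L u"
  define G where "G m = sa_form L (replicate m w @ replicate (j + 1 - m) u)" for m
  have "((\<lambda>t. c t - 1 + 1) \<longlongrightarrow> 0 + 1) (at 0)"
    using c by (intro tendsto_add bigo_square_tendsto_zero quadratic_approx_bigo) auto
  then have "eventually (\<lambda>t. c t powr q * E0 \<le> energy j L (\<lambda>x. u x + t * w x)) (at 0)"
    using energy_ge_rescaled_perturbation[OF w] unfolding c_def q_def E0_def by simp
  moreover have "G 0 = E0"
    unfolding G_def E0_def energy_eq_sa_form by simp
  ultimately have "eventually (\<lambda>t. real (j + 1) * G 1 * t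
      + (real ((j + 1) choose 2) * G 2 - q * A * E0) * t^2
      + ((energy j L (\<lambda>x. u x + t * w x) - (G 0 + real (j + 1) * G 1 * t + real ((j + 1) choose 2) * G 2 * t^2))
        - E0 * (c t powr q - 1 - q * A * t^2)) \<ge> 0) (at 0)"
    by (auto elim!: eventually_mono simp: algebra_simps)
  moreover have "(\<lambda>t. energy j L (\<lambda>x. u x + t * w x) - (G 0 + real (j + 1) * G 1 * t
      + real ((j + 1) choose 2) * G 2 * t^2)) \<in> O[at 0](\<lambda>t. t^3)"
    using polynomial_taylor2_bigo[of "j + 1" "\<lambda>m. real ((j + 1) choose m) * G m"] \<open>j > 0\<close>
    unfolding energy_binomial[OF u_smooth w] G_def by (simp add: mult_ac)
  moreover have "(\<lambda>t. E0 * (c t powr q - 1 - q * A * t^2)) \<in> O[at 0](\<lambda>t. t^3)"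
    using powr_second_order_bigo[OF c] by simp
  ultimately have "real ((j + 1) choose 2) * G 2 - q * A * E0 \<ge> 0"
    by (rule cubic_perturbation_quadratic_coeff_nonneg[OF _ sum_in_bigo(2)])
  then show ?thesis
    unfolding q_def E0_def G_def by (simp add: numeral_2_eq_2)
qed

lemma normalized_mass_coord_perturbation:
  assumes pos: "\<And>x. x \<in> sphere 0 1 \<Longrightarrow> u x > 0"
    and mom: "sphere_int (\<lambda>x. x $ i * u x powr p) = 0"
  shows "(\<lambda>t. sphere_int (\<lambda>x. \<bar>u x + t * (x $ i * u x)\<bar> powr p) / omega TYPE('n) - 1
      - p * (p - 1) / 2 * sphere_int (\<lambda>x. (x $ i)^2 * u x powr p) / omega TYPE('n) * t^2)
    \<in> O[at 0](\<lambda>t. t^3)"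
proof -
  have \<omega>: "omega TYPE('n) > 0" by (rule omega_pos)
  have "(\<lambda>t. (sphere_int (\<lambda>x. \<bar>u x + t * (x $ i * u x)\<bar> powr p) - omega TYPE('n)
      - p * (p - 1) / 2 * sphere_int (\<lambda>x. (x $ i)^2 * u x powr p) * t^2) / omega TYPE('n))
    \<in> O[at 0](\<lambda>t. t^3)"
    using sphere_int_powr_coord_perturbation[OF smooth_sphere_continuous_on[OF u_smooth] pos mom]
      \<omega> sphere_int_u_powr[OF pos] by simp
  then show ?thesis
    using \<omega> by (simp add: diff_divide_distrib)
qed

lemma second_variation_coord_ge:
  assumes "j > 0" and pos: "\<And>x. x \<in> sphere 0 1 \<Longrightarrow> u x > 0"
    and mom: "sphere_int (\<lambda>x. x $ i * u x powr p) = 0"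
  shows "(p - 1) * energy j L u * sphere_int (\<lambda>x. (x $ i)^2 * u x powr p) / omega TYPE('n)
    \<le> real j * sa_form L ((\<lambda>x. x $ i * u x) # (\<lambda>x. x $ i * u x) # replicate (j - 1) u)"
proof -
  define X where "X = (p - 1) * energy j L u * sphere_int (\<lambda>x. (x $ i)^2 * u x powr p) / omega TYPE('n)"
  define Y where "Y = sa_form L ((\<lambda>x. x $ i * u x) # (\<lambda>x. x $ i * u x) # replicate (j - 1) u)"
  define K where "K = (j + 1) / p * (p * (p - 1) / 2 * sphere_int (\<lambda>x. (x $ i)^2 * u x powr p) / omega TYPE('n))"
  have "K * energy j L u \<le> real ((j + 1) choose 2) * Y"
    unfolding K_def Y_def
    by (rule second_variation_ge[OF \<open>j > 0\<close> smooth_sphere_coord_mult[OF u_smooth]])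
      (rule normalized_mass_coord_perturbation[OF pos mom])
  moreover have "real ((j + 1) choose 2) = (real j + 1) / 2 * real j"
  proof -
    have "even ((j + 1) * j)" by simp
    then show ?thesis by (simp add: choose_two real_of_nat_div algebra_simps)
  qed
  moreover have "K * energy j L u = (real j + 1) / 2 * X"
    using p_pos omega_pos[where 'n = 'n] by (simp add: K_def X_def field_simps)
  ultimately have "(real j + 1) / 2 * X \<le> (real j + 1) / 2 * (real j * Y)"
    by (simp only: mult.assoc)
  then show ?thesis
    unfolding X_def[symmetric] Y_def[symmetric] by simp
qed

lemma sum_second_variation_ge:
  assumes "j > 0" and pos: "\<And>x. x \<in> sphere 0 1 \<Longrightarrow> u x > 0"
    and mom: "\<And>i. sphere_int (\<lambda>x. x $ i * u x powr p) = 0"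
  shows "(p - 1) * energy j L u
    \<le> real j * (\<Sum>i\<in>UNIV. sa_form L ((\<lambda>x. x $ i * u x) # (\<lambda>x. x $ i * u x) # replicate (j - 1) u))"
proof -
  have "(\<Sum>i\<in>UNIV. sphere_int (\<lambda>x. (x $ i)^2 * u x powr p)) = omega TYPE('n)"
    using sphere_int_sum_coord_sq[OF u_powr_continuous_on[OF pos]] sphere_int_u_powr[OF pos] by simp
  then have "(p - 1) * energy j L u
      = (\<Sum>i\<in>UNIV. (p - 1) * energy j L u * sphere_int (\<lambda>x. (x $ i)^2 * u x powr p) / omega TYPE('n))"
    using omega_pos[where 'n = 'n] by (simp add: sum_divide_distrib[symmetric] sum_distrib_left[symmetric])
  also have "\<dots> \<le> real j *
      (\<Sum>i\<in>UNIV. sa_form L ((\<lambda>x. x $ i * u x) # (\<lambda>x. x $ i * u x) # replicate (j - 1) u))"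
    unfolding sum_distrib_left by (intro sum_mono second_variation_coord_ge assms)
  finally show ?thesis .
qed

lemma sum_coord_commutator_eq:
  assumes "j > 0"
  shows "(\<Sum>i\<in>UNIV. sphere_int (\<lambda>x. x $ i * u x *
      (L ((\<lambda>y. y $ i * u y) # replicate (j - 1) u) x - x $ i * L (replicate j u) x)))
    = (\<Sum>i\<in>UNIV. sa_form L ((\<lambda>x. x $ i * u x) # (\<lambda>x. x $ i * u x) # replicate (j - 1) u)) - energy j L u"
proof -
  define w where "w i x = x $ i * u x" for i x
  have uc: "continuous_on (sphere 0 1) u" by (rule smooth_sphere_continuous_on[OF u_smooth])
  have cL: "continuous_on (sphere 0 1) (L (replicate j u))"
    by (intro smooth_sphere_continuous_on L_smooth) (auto simp: u_smooth)
  have cwL: "continuous_on (sphere 0 1) (\<lambda>x. w i x * L (w i # replicate (j - 1) u) x)" for i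
    unfolding w_def using assms
    by (intro continuous_intros uc smooth_sphere_continuous_on L_smooth)
      (auto simp: u_smooth smooth_sphere_coord_mult)
  have "sphere_int (\<lambda>x. w i x * (L (w i # replicate (j - 1) u) x - x $ i * L (replicate j u) x))
      = sa_form L (w i # w i # replicate (j - 1) u) - sphere_int (\<lambda>x. (x $ i)^2 * (u x * L (replicate j u) x))"
    for i
  proof -
    have "w i x * (L (w i # replicate (j - 1) u) x - x $ i * L (replicate j u) x)
        = w i x * L (w i # replicate (j - 1) u) x - (x $ i)^2 * (u x * L (replicate j u) x)" for x
      using w_def[of i x] by (simp add: algebra_simps power2_eq_square)
    then show ?thesis
      unfolding sa_form_def using cwL[of i]
      by (simp add: sphere_int_diff continuous_intros uc cL)
  qed
  moreover have "(\<Sum>i\<in>UNIV. sphere_int (\<lambda>x. (x $ i)^2 * (u x * L (replicate j u) x))) = energy j L u"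
    unfolding energy_def by (rule sphere_int_sum_coord_sq) (intro continuous_intros uc cL)
  ultimately show ?thesis
    unfolding w_def[abs_def] by (simp add: sum_subtractf)
qed

end

theorem proposition4p1:
  fixes L :: "(real^'n \<Rightarrow> real) list \<Rightarrow> real^'n \<Rightarrow> real"
    and n k j :: nat and p :: real and u :: "real^'n \<Rightarrow> real"
  assumes "n = CARD('n) - 1"
    and "k > 0" and "j > 0" and "n > 2 * k"
    and "formally_self_adjoint j L"
    and "p = real (n * (j + 1)) / real (n - 2 * k)"
    and "u \<in> constraint_set p"
    and "\<forall>x\<in>sphere 0 1. u x > 0"
    and "local_minimizer (energy j L) (constraint_set p) u"
    and "\<forall>i. sphere_int (\<lambda>x. x $ i * u x powr p) = 0"
  shows "(\<Sum>i\<in>UNIV. sphere_int (\<lambda>x. x $ i * u x *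
            (L ((\<lambda>y. y $ i * u y) # replicate (j - 1) u) x - x $ i * L (replicate j u) x)))
         \<ge> 2 * real (j + 1) * real k / (real j * real (n - 2 * k)) * energy j L u"
proof -
  have nk: "real (n - 2 * k) = real n - 2 * real k" "real n - 2 * real k > 0"
    using \<open>n > 2 * k\<close> by (simp_all add: of_nat_diff)
  then have p: "p = real n * (real j + 1) / (real n - 2 * real k)"
    using assms(6) by (simp add: algebra_simps)
  then have "p > 0"
    using nk \<open>n > 2 * k\<close> by (auto intro!: divide_pos_pos)
  with assms interpret constrained_local_min j L p u
    by unfold_locales auto
  have coef: "2 * real (j + 1) * real k / (real j * real (n - 2 * k)) = (p - 1 - real j) / real j"
    using nk \<open>j > 0\<close> unfolding p by (simp add: field_simps)
  show ?thesis
    unfolding sum_coord_commutator_eq[OF \<open>j > 0\<close>] coef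
    using sum_second_variation_ge[OF \<open>j > 0\<close>] assms(8,10) \<open>j > 0\<close>
    by (simp add: field_simps)
qed

end
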